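(* Let $s$ be a Sturmian word having a factorization $s=U_1U_2\cdots U_n\cdots$ where each $U_i$ ($i\ge1$) is a non-empty prefix of $s$. Then there exist integers $i,j\ge1$ with $r_s(U_i)\neq r_s(U_j)$.
   Context: A Sturmian word is an infinite word $s\in\{a,b\}^{\omega}$ that is aperiodic (not ultimately periodic) and balanced: for all factors $u,v$ of $s$ with $|u|=|v|$ one has $||u|_x-|v|_x|\le 1$ for $x\in\{a,b\}$, where $|u|_x$ is the number of occurrences of $x$ in $u$. A non-empty factor $w$ of $s$ is rich in the letter $z\in\{a,b\}$ if there is a factor $v$ of $s$ with $|v|=|w|$ and $|w|_z>|v|_z$; every non-empty factor of a Sturmian word is rich in exactly one letter, and $r_s(w)\in\{a,b\}$ denotes that letter. *)

theory Defs
  imports Main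
begin

datatype letter = a | b

type_synonym word = "nat \<Rightarrow> letter"

definition factor_at :: "word \<Rightarrow> nat \<Rightarrow> nat \<Rightarrow> letter list" where
  "factor_at s i n = map s [i..<i+n]"

definition is_factor :: "word \<Rightarrow> letter list \<Rightarrow> bool" where
  "is_factor s w \<longleftrightarrow> (\<exists>i. w = factor_at s i (length w))"

definition is_prefix :: "word \<Rightarrow> letter list \<Rightarrow> bool" where
  "is_prefix s w \<longleftrightarrow> w = factor_at s 0 (length w)"

definition letter_count :: "letter \<Rightarrow> letter list \<Rightarrow> nat" where
  "letter_count x u = length (filter (\<lambda>y. y = x) u)"

definition ultimately_periodic :: "word \<Rightarrow> bool" where
  "ultimately_periodic s \<longleftrightarrow> (\<exists>p>0. \<exists>n0. \<forall>n\<ge>n0. s (n + p) = s n)"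

definition balanced :: "word \<Rightarrow> bool" where
  "balanced s \<longleftrightarrow> (\<forall>u v x. is_factor s u \<longrightarrow> is_factor s v \<longrightarrow> length u = length v \<longrightarrow>
      letter_count x u \<le> letter_count x v + 1 \<and> letter_count x v \<le> letter_count x u + 1)"

definition sturmian :: "word \<Rightarrow> bool" where
  "sturmian s \<longleftrightarrow> \<not> ultimately_periodic s \<and> balanced s"

definition rich_in :: "word \<Rightarrow> letter list \<Rightarrow> letter \<Rightarrow> bool" where
  "rich_in s w z \<longleftrightarrow> w \<noteq> [] \<and> is_factor s w \<and>
     (\<exists>v. is_factor s v \<and> length v = length w \<and> letter_count z w > letter_count z v)"

definition rich_letter :: "word \<Rightarrow> letter list \<Rightarrow> letter" where
  "rich_letter s w = (THE z. rich_in s w z)"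

fun block_start :: "(nat \<Rightarrow> letter list) \<Rightarrow> nat \<Rightarrow> nat" where
  "block_start U 0 = 0"
| "block_start U (Suc i) = block_start U i + length (U i)"

definition is_factorization :: "word \<Rightarrow> (nat \<Rightarrow> letter list) \<Rightarrow> bool" where
  "is_factorization s U \<longleftrightarrow> (\<forall>i. U i \<noteq> [] \<and> U i = factor_at s (block_start U i) (length (U i)))"

end

theory Submission
  imports Defs
begin

text \<open>Suppose all blocks are rich in the same letter x. Each block is both a prefix of s and the
  factor at its starting position, and a rich factor of a balanced word contains the maximal number
  of x's among factors of its length. If the block lengths are unbounded, this maximality and the
  aperiodicity of s make the suffixes of s at the block starts strictly decreasing in the
  lexicographic order with x on top, which is incompatible with the long blocks being copies of the
  prefix. If the lengths are bounded, some length m recurs infinitely often; aperiodicity yields two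
  windows of length m with fewer x's lying a multiple of m apart, and regrouping the blocks produces
  a factor with two x's fewer than the prefix of the same length, against balance.\<close>

definition window_count :: "word \<Rightarrow> letter \<Rightarrow> nat \<Rightarrow> nat \<Rightarrow> nat" where
  "window_count s x p n = (\<Sum>i<n. if s (p + i) = x then 1 else 0)"

lemma window_count_0 [simp]: "window_count s x p 0 = 0"
  by (simp add: window_count_def)

lemma window_count_Suc:
  "window_count s x p (Suc n) = window_count s x p n + (if s (p + n) = x then 1 else 0)"
  by (simp add: window_count_def)

lemma window_count_add:
  "window_count s x p (m + n) = window_count s x p m + window_count s x (p + m) n"
  by (induction n) (auto simp: window_count_Suc add.assoc)

lemma window_count_cong:
  "(\<And>i. i < n \<Longrightarrow> s (p + i) = s (q + i)) \<Longrightarrow> window_count s x p n = window_count s x q n"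
  unfolding window_count_def by (rule sum.cong) auto

lemma window_count_a_plus_b: "window_count s a p n + window_count s b p n = n"
proof (induction n)
  case (Suc n)
  then show ?case by (cases "s (p + n)") (auto simp: window_count_Suc)
qed simp

lemma window_count_mult_le:
  assumes "\<And>q. window_count s x q m \<le> M"
  shows "window_count s x p (k * m) \<le> k * M"
proof (induction k arbitrary: p)
  case (Suc k)
  have "window_count s x p (Suc k * m) = window_count s x p m + window_count s x (p + m) (k * m)"
    by (simp add: window_count_add)
  then show ?case using assms[of p] Suc[of "p + m"] by simp
qed simp

lemma window_count_sum_le:
  assumes "finite A" and "\<And>i q. i \<in> A \<Longrightarrow> window_count s x q (n i) \<le> M i"
  shows "window_count s x q (\<Sum>i\<in>A. n i) \<le> (\<Sum>i\<in>A. M i)"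
  using assms
proof (induction A arbitrary: q rule: finite_induct)
  case (insert i A)
  have "window_count s x q (\<Sum>j\<in>insert i A. n j)
      = window_count s x q (n i) + window_count s x (q + n i) (\<Sum>j\<in>A. n j)"
    using insert(1,2) by (simp add: window_count_add)
  then show ?case using insert by (simp add: add_mono)
qed simp

lemma length_factor_at [simp]: "length (factor_at s p n) = n"
  by (simp add: factor_at_def)

lemma is_factor_factor_at: "is_factor s (factor_at s p n)"
  unfolding is_factor_def by (metis length_factor_at)

lemma letter_count_factor_at: "letter_count x (factor_at s p n) = window_count s x p n"
  by (induction n) (auto simp: letter_count_def factor_at_def window_count_Suc)

lemma balanced_window_count:
  assumes "balanced s"
  shows "window_count s x p n \<le> window_count s x q n + 1"
  using assms is_factor_factor_at[of s p n] is_factor_factor_at[of s q n]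
  unfolding balanced_def by (fastforce simp: letter_count_factor_at)

lemma eventually_constant_window_count_imp_periodic:
  assumes "n > 0" and "\<And>q. q \<ge> Q \<Longrightarrow> window_count s x q n = C"
  shows "ultimately_periodic s"
proof -
  have "s (q + n) = s q" if "q \<ge> Q" for q
  proof -
    have "window_count s x q (Suc n) = window_count s x q (1 + n)" by simp
    then have "window_count s x q n + (if s (q + n) = x then 1 else 0)
             = (if s q = x then 1 else 0) + window_count s x (q + 1) n"
      by (simp only: window_count_Suc window_count_add) (simp add: window_count_Suc)
    moreover have "window_count s x (q + 1) n = window_count s x q n"
      using assms(2) that by simp
    ultimately show ?thesis by (cases "s (q + n)"; cases "s q"; cases x) auto
  qed
  then show ?thesis unfolding ultimately_periodic_def using assms(1) by blast
qed

lemma not_periodic_shift_differs: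
  assumes "\<not> ultimately_periodic s" and "m > 0"
  shows "\<exists>j. s (p + j) \<noteq> s (p + m + j)"
proof (rule ccontr)
  assume "\<not> ?thesis"
  then have "s (q + m) = s q" if "q \<ge> p" for q
    using that by (metis add.assoc add.commute le_iff_add)
  then show False using assms unfolding ultimately_periodic_def by blast
qed

lemma rich_in_factor_at_iff:
  "rich_in s (factor_at s p n) z \<longleftrightarrow> n > 0 \<and> (\<exists>q. window_count s z q n < window_count s z p n)"
proof
  assume "rich_in s (factor_at s p n) z"
  then obtain v where v: "is_factor s v" "length v = n" "letter_count z v < window_count s z p n"
    and "factor_at s p n \<noteq> []"
    unfolding rich_in_def by (auto simp: letter_count_factor_at)
  then have "n > 0"
    by (metis length_factor_at length_greater_0_conv)
  moreover obtain q where "v = factor_at s q n"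
    using v(1,2) unfolding is_factor_def by blast
  ultimately show "n > 0 \<and> (\<exists>q. window_count s z q n < window_count s z p n)"
    using v(3) by (auto simp: letter_count_factor_at)
next
  assume "n > 0 \<and> (\<exists>q. window_count s z q n < window_count s z p n)"
  then obtain q where "n > 0" "window_count s z q n < window_count s z p n" by blast
  moreover have "factor_at s p n \<noteq> []"
    using \<open>n > 0\<close> length_factor_at[of s p n] by force
  ultimately show "rich_in s (factor_at s p n) z"
    unfolding rich_in_def using is_factor_factor_at
    by (auto simp: letter_count_factor_at intro!: exI[of _ "factor_at s q n"])
qed

lemma rich_in_window_count_max:
  assumes "balanced s" and "rich_in s (factor_at s p n) z"
  shows "window_count s z q n \<le> window_count s z p n"
proof -
  obtain q' where "window_count s z q' n < window_count s z p n"
    using assms(2) rich_in_factor_at_iff by blast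
  then show ?thesis using balanced_window_count[OF assms(1), of z q n q'] by linarith
qed

lemma sturmian_rich_in_exists:
  assumes "sturmian s" and "n > 0"
  shows "\<exists>z. rich_in s (factor_at s p n) z"
proof (rule ccontr)
  assume "\<not> ?thesis"
  then have "\<not> window_count s z q n < window_count s z p n" for z q
    using rich_in_factor_at_iff assms(2) by blast
  then have "window_count s b q n = window_count s b p n" for q
    using window_count_a_plus_b[of s q n] window_count_a_plus_b[of s p n]
    by (metis not_less add_le_mono le_antisym add_le_cancel_left)
  then have "ultimately_periodic s"
    using eventually_constant_window_count_imp_periodic[OF assms(2)] by blast
  then show False using assms(1) unfolding sturmian_def by blast
qed

lemma balanced_rich_in_unique:
  assumes "balanced s" and "rich_in s (factor_at s p n) z" and "rich_in s (factor_at s p n) z'"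
  shows "z = z'"
proof (rule ccontr)
  assume "z \<noteq> z'"
  then have "rich_in s (factor_at s p n) a" "rich_in s (factor_at s p n) b"
    using assms(2,3) by (cases z; cases z'; simp)+
  then obtain q where "window_count s a q n < window_count s a p n"
    using rich_in_factor_at_iff by blast
  then have "window_count s b p n < window_count s b q n"
    using window_count_a_plus_b[of s q n] window_count_a_plus_b[of s p n] by linarith
  moreover have "window_count s b q n \<le> window_count s b p n"
    using rich_in_window_count_max[OF assms(1) \<open>rich_in s (factor_at s p n) b\<close>] .
  ultimately show False by linarith
qed

lemma sturmian_rich_in_rich_letter:
  assumes "sturmian s" and "n > 0"
  shows "rich_in s (factor_at s p n) (rich_letter s (factor_at s p n))"
proof -
  have "balanced s" using assms(1) unfolding sturmian_def by blast
  then have "\<exists>!z. rich_in s (factor_at s p n) z"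
    using sturmian_rich_in_exists[OF assms] balanced_rich_in_unique by blast
  then show ?thesis unfolding rich_letter_def by (rule theI')
qed

definition suffix_at :: "word \<Rightarrow> nat \<Rightarrow> word" where
  "suffix_at s p = (\<lambda>j. s (p + j))"

definition lex_greater_at :: "letter \<Rightarrow> word \<Rightarrow> word \<Rightarrow> nat \<Rightarrow> bool" where
  "lex_greater_at x u v j \<longleftrightarrow> (\<forall>i<j. u i = v i) \<and> u j = x \<and> v j \<noteq> x"

lemma lex_greater_at_trans:
  assumes "lex_greater_at x u v j" and "lex_greater_at x v w k"
  shows "lex_greater_at x u w (min j k)"
  using assms unfolding lex_greater_at_def
  by (cases j k rule: linorder_cases) (auto simp: min_def)

lemma lex_greater_at_differs: "lex_greater_at x u v j \<Longrightarrow> u j \<noteq> v j"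
  by (auto simp: lex_greater_at_def)

text \<open>Otherwise the window of length m starting just after the first difference would contain
  one x more than the maximal window at p.\<close>
lemma max_window_count_lex_greater:
  assumes max: "\<And>q. window_count s x q m \<le> window_count s x p m"
    and differs: "\<exists>j. s (p + j) \<noteq> s (p + m + j)"
  shows "\<exists>j. lex_greater_at x (suffix_at s p) (suffix_at s (p + m)) j"
proof -
  define j where "j = (LEAST j. s (p + j) \<noteq> s (p + m + j))"
  have first: "s (p + j) \<noteq> s (p + m + j)" unfolding j_def using LeastI_ex[OF differs] .
  have before: "s (p + i) = s (p + m + i)" if "i < j" for i
    using not_less_Least[of i] that unfolding j_def by blast
  show ?thesis
  proof (cases "s (p + j) = x")
    case True
    then have "lex_greater_at x (suffix_at s p) (suffix_at s (p + m)) j"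
      using first before by (simp add: lex_greater_at_def suffix_at_def)
    then show ?thesis ..
  next
    case False
    then have "s (p + m + j) = x" using first by (cases x; cases "s (p + j)"; cases "s (p + m + j)") auto
    then have "window_count s x (p + m) (Suc j) = window_count s x (p + m) j + 1"
      by (simp add: window_count_Suc)
    moreover have "window_count s x p (Suc j) = window_count s x p j"
      using False by (simp add: window_count_Suc)
    moreover have "window_count s x p j = window_count s x (p + m) j"
      using before by (intro window_count_cong) (simp add: add.assoc)
    moreover have "window_count s x p m + window_count s x (p + m) (Suc j)
        = window_count s x p (Suc j) + window_count s x (p + Suc j) m"
      by (metis add.commute window_count_add)
    ultimately have "window_count s x (p + Suc j) m = window_count s x p m + 1"
      by linarith
    then show ?thesis using max[of "p + Suc j"] by linarith
  qed
qed

lemma aperiodic_window_count_deficit: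
  assumes "\<not> ultimately_periodic s" and "m > 0" and max: "\<And>q. window_count s x q m \<le> M"
  shows "\<exists>p T. window_count s x p (T * m) + 2 \<le> T * M"
proof -
  define L where "L = {q. window_count s x q m < M}"
  have "infinite L"
  proof
    assume "finite L"
    then obtain Q where "\<forall>q\<in>L. q < Q" using finite_nat_set_iff_bounded by blast
    then have "window_count s x q m = M" if "q \<ge> Q" for q
      using that max[of q] unfolding L_def by (meson le_antisym mem_Collect_eq not_le)
    then show False
      using assms(1) eventually_constant_window_count_imp_periodic[OF assms(2)] by blast
  qed
  moreover have "finite ((\<lambda>q. q mod m) ` L)"
    by (rule finite_subset[of _ "{..<m}"]) (use assms(2) in auto)
  ultimately obtain q1 where "q1 \<in> L" and "infinite {q\<in>L. q mod m = q1 mod m}"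
    using pigeonhole_infinite by blast
  then have "\<not> (\<forall>q\<in>{q\<in>L. q mod m = q1 mod m}. q \<le> q1)"
    using finite_nat_set_iff_bounded_le by blast
  then obtain q2 where q2: "q2 \<in> L" "q2 mod m = q1 mod m" "q1 < q2"
    by auto
  then have "m dvd q2 - q1"
    using mod_eq_dvd_iff_nat[of q1 q2 m] by simp
  then obtain k' where "q2 - q1 = m * k'" ..
  moreover have "k' \<noteq> 0" using calculation q2(3) by (intro notI) simp
  then obtain k where "k' = Suc k" using not0_implies_Suc by blast
  ultimately have q2_eq: "q2 = (q1 + m) + k * m" using q2(3) by (simp add: algebra_simps)
  have "window_count s x q1 (Suc (Suc k) * m)
      = window_count s x q1 m + window_count s x (q1 + m) (k * m) + window_count s x q2 m"
    unfolding q2_eq mult_Suc add.commute[of m "k * m"] window_count_add by (simp add: add.assoc)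
  moreover have "window_count s x (q1 + m) (k * m) \<le> k * M"
    by (rule window_count_mult_le[OF max])
  moreover have "window_count s x q1 m < M" "window_count s x q2 m < M"
    using \<open>q1 \<in> L\<close> q2(1) unfolding L_def by simp_all
  ultimately have "window_count s x q1 (Suc (Suc k) * m) + 2 \<le> Suc (Suc k) * M"
    by simp
  then show ?thesis by blast
qed

lemma block_start_eq_sum: "block_start U K = (\<Sum>i<K. length (U i))"
  by (induction K) simp_all

lemma window_count_block_start:
  "window_count s x 0 (block_start U K) = (\<Sum>i<K. window_count s x (block_start U i) (length (U i)))"
  by (induction K) (simp_all add: window_count_add)

locale heavy_prefix_factorization =
  fixes s :: word and x :: letter and U :: "nat \<Rightarrow> letter list"
  assumes not_periodic: "\<not> ultimately_periodic s"
    and factorization: "is_factorization s U"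
    and prefix: "\<And>i. is_prefix s (U i)"
    and heavy: "\<And>i q. window_count s x q (length (U i)) \<le> window_count s x 0 (length (U i))"
begin

lemma length_pos: "length (U i) > 0"
  using factorization unfolding is_factorization_def by blast

lemma block_eq_prefix:
  assumes "j < length (U i)"
  shows "s (block_start U i + j) = s j"
proof -
  have "factor_at s (block_start U i) (length (U i)) = factor_at s 0 (length (U i))"
    using factorization prefix[of i] unfolding is_factorization_def is_prefix_def by metis
  then have "factor_at s (block_start U i) (length (U i)) ! j = factor_at s 0 (length (U i)) ! j"
    by simp
  then show ?thesis using assms by (simp add: factor_at_def)
qed

lemma window_count_block:
  "window_count s x (block_start U i) (length (U i)) = window_count s x 0 (length (U i))"
  by (rule window_count_cong) (simp add: block_eq_prefix)

lemma block_suffix_lex_greater: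
  "\<exists>j. lex_greater_at x (suffix_at s (block_start U i)) (suffix_at s (block_start U (Suc i))) j"
  using max_window_count_lex_greater[of s x "length (U i)" "block_start U i"]
    heavy window_count_block not_periodic_shift_differs[OF not_periodic length_pos]
  by simp

lemma lex_greater_block_suffixes:
  obtains d where "\<And>k. \<exists>j\<le>d. lex_greater_at x s (suffix_at s (block_start U (Suc k))) j"
proof -
  obtain d where d: "lex_greater_at x s (suffix_at s (block_start U 1)) d"
    using block_suffix_lex_greater[of 0] by (auto simp: suffix_at_def)
  have "\<exists>j\<le>d. lex_greater_at x s (suffix_at s (block_start U (Suc k))) j" for k
  proof (induction k)
    case (Suc k)
    then obtain j where "j \<le> d" "lex_greater_at x s (suffix_at s (block_start U (Suc k))) j"
      by blast
    moreover obtain j' where "lex_greater_at x (suffix_at s (block_start U (Suc k)))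
        (suffix_at s (block_start U (Suc (Suc k)))) j'"
      using block_suffix_lex_greater by blast
    ultimately show ?case using lex_greater_at_trans by (meson min.coboundedI1)
  qed (use d in auto)
  then show ?thesis using that by blast
qed

lemma lengths_bounded: "\<exists>B. \<forall>i. length (U i) \<le> B"
proof (rule ccontr)
  assume unbounded: "\<not> ?thesis"
  obtain d where d: "\<And>k. \<exists>j\<le>d. lex_greater_at x s (suffix_at s (block_start U (Suc k))) j"
    using lex_greater_block_suffixes by blast
  obtain i where i: "length (U i) > max d (length (U 0))"
    using unbounded by (meson not_le)
  then obtain k where "i = Suc k" by (metis max.strict_boundedE not0_implies_Suc less_irrefl)
  moreover obtain j where "j \<le> d" "lex_greater_at x s (suffix_at s (block_start U (Suc k))) j"
    using d by blast
  ultimately have "s j \<noteq> s (block_start U i + j)"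
    using lex_greater_at_differs[of x s] by (simp add: suffix_at_def)
  moreover have "j < length (U i)" using i \<open>j \<le> d\<close> by simp
  ultimately show False using block_eq_prefix by simp
qed

lemma lengths_unbounded:
  assumes "balanced s"
  shows "\<not> (\<exists>B. \<forall>i. length (U i) \<le> B)"
proof
  assume "\<exists>B. \<forall>i. length (U i) \<le> B"
  then obtain B where "range (\<lambda>i. length (U i)) \<subseteq> {..B}" by auto
  then have "finite (range (\<lambda>i. length (U i)))" using finite_subset by blast
  then obtain i0 where "infinite {i. length (U i) = length (U i0)}"
    using pigeonhole_infinite[OF infinite_UNIV_nat] by auto
  define m where "m = length (U i0)"
  define M where "M = window_count s x 0 m"
  obtain p T where deficit: "window_count s x p (T * m) + 2 \<le> T * M"
    using aperiodic_window_count_deficit[OF not_periodic length_pos heavy] unfolding m_def M_def by blast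
  obtain I where I: "finite I" "card I = T" "I \<subseteq> {i. length (U i) = m}"
    using infinite_arbitrarily_large \<open>infinite _\<close> unfolding m_def by blast
  obtain K where K: "I \<subseteq> {..<K}"
    using I(1) finite_nat_set_iff_bounded by auto
  define A where "A = {..<K} - I"
  have "(\<Sum>i\<in>I. f (length (U i))) = T * f m" for f :: "nat \<Rightarrow> nat"
    using I by (simp add: subset_iff)
  from this[of id] this[of "window_count s x 0"]
  have "(\<Sum>i\<in>I. length (U i)) = T * m" and "(\<Sum>i\<in>I. window_count s x 0 (length (U i))) = T * M"
    unfolding M_def by simp_all
  then have "block_start U K = T * m + (\<Sum>i\<in>A. length (U i))"
    and "window_count s x 0 (block_start U K) = T * M + (\<Sum>i\<in>A. window_count s x 0 (length (U i)))"
    using sum.subset_diff[OF K, of "\<lambda>i. length (U i)"]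
      sum.subset_diff[OF K, of "\<lambda>i. window_count s x 0 (length (U i))"]
    unfolding A_def window_count_block_start window_count_block
    by (simp_all add: block_start_eq_sum)
  moreover have "window_count s x (p + T * m) (\<Sum>i\<in>A. length (U i))
      \<le> (\<Sum>i\<in>A. window_count s x 0 (length (U i)))"
    using heavy by (intro window_count_sum_le) (auto simp: A_def)
  ultimately show False
    using balanced_window_count[OF assms, of x 0 "block_start U K" p] deficit
    by (simp add: window_count_add)
qed

end

theorem mainTheorem7:
  fixes s :: word and U :: "nat \<Rightarrow> letter list"
  assumes "sturmian s"
    and "is_factorization s U"
    and "\<forall>i. is_prefix s (U i)"
  shows "\<exists>i j. rich_letter s (U i) \<noteq> rich_letter s (U j)"
proof (rule ccontr)
  assume "\<not> ?thesis"
  then have same: "rich_letter s (U i) = rich_letter s (U 0)" for i by blast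
  define x where "x = rich_letter s (U 0)"
  have balanced: "balanced s" and not_periodic: "\<not> ultimately_periodic s"
    using assms(1) unfolding sturmian_def by auto
  have "rich_in s (U i) x" for i
    using sturmian_rich_in_rich_letter[OF assms(1)] assms(2,3) same[of i]
    unfolding is_factorization_def is_prefix_def x_def by (metis length_greater_0_conv)
  then have "window_count s x q (length (U i)) \<le> window_count s x 0 (length (U i))" for i q
    using rich_in_window_count_max[OF balanced] assms(3) unfolding is_prefix_def by metis
  then interpret heavy_prefix_factorization s x U
    using not_periodic assms(2,3) by unfold_locales blast+
  show False using lengths_bounded lengths_unbounded[OF balanced] by blast
qed

end
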